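(* Let $f \in \mathbb{N}_0[x^{\pm 1}]$ satisfy $|\operatorname{supp}(f)| \geq 3$. Then $f = g + h$ for some $g, h \in \mathbb{N}_0[x^{\pm 1}]$ such that $g$ is hyper-monolithic and $h(1) \leq g(1)$.
   Context: $\mathbb{N}_0[x^{\pm 1}]$ denotes the semiring of Laurent polynomials in $x$ with nonnegative integer coefficients; $\operatorname{supp}(f)$ is the set of exponents occurring in $f$ with nonzero coefficient. Writing $f = \sum_{i=0}^{n} c_i x^{k_i}$ with $c_i$ positive integers and $k_0 > \cdots > k_n$, $f$ is hyper-monolithic if $|\operatorname{supp}(f)| > 1$ and either $k_0 - k_1 < k_i - k_{i+1}$ for every $i \in \{1,\ldots,n-1\}$, or $k_{n-1} - k_n < k_j - k_{j+1}$ for every $j \in \{0,\ldots,n-2\}$. *)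

theory Defs
  imports Main "HOL-Library.Poly_Mapping"
begin

text \<open>Laurent polynomials in x with nonnegative integer coefficients:
  finitely supported maps from exponents (int) to coefficients (nat).\<close>
type_synonym laurent_N0 = "int \<Rightarrow>\<^sub>0 nat"

definition supp :: "laurent_N0 \<Rightarrow> int set" where
  "supp f = Poly_Mapping.keys f"

definition eval1 :: "laurent_N0 \<Rightarrow> nat" where
  "eval1 f = (\<Sum>k\<in>Poly_Mapping.keys f. Poly_Mapping.lookup f k)"

definition exps :: "laurent_N0 \<Rightarrow> int list" where
  "exps f = rev (sorted_list_of_set (Poly_Mapping.keys f))"

definition hyper_monolithic :: "laurent_N0 \<Rightarrow> bool" where
  "hyper_monolithic f \<longleftrightarrow> card (supp f) > 1 \<and>
     (let ks = exps f; n = length ks - 1 in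
       (\<forall>i. 1 \<le> i \<and> i \<le> n - 1 \<longrightarrow> ks!0 - ks!1 < ks!i - ks!(i+1)) \<or>
       (\<forall>j. j + 2 \<le> n \<longrightarrow> ks!(n-1) - ks!n < ks!j - ks!(j+1)))"

end

theory Submission
  imports Defs
begin

(* Let d be the smallest gap between exponents of f. The exponents split into maximal
   chains x, x + d, ..., x + k d; colouring every chain alternately and putting each isolated
   exponent into both colours gives two sets all of whose gaps exceed d. Adding to a colour class
   the lowest pair (a, a + d) at distance d and discarding what lies below it yields a support
   whose unique smallest gap is its bottom gap, and symmetrically at the top. The two lower and
   two upper sets obtained in this way cover every exponent at least twice, so one of the four
   carries at least half of f(1). *)

definition restrict_keys :: "('a \<Rightarrow>\<^sub>0 'b::zero) \<Rightarrow> 'a set \<Rightarrow> 'a \<Rightarrow>\<^sub>0 'b" where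
  "restrict_keys f T = Poly_Mapping.mapp (\<lambda>k c. c when k \<in> T) f"

lemma lookup_restrict_keys:
  "Poly_Mapping.lookup (restrict_keys f T) k = (Poly_Mapping.lookup f k when k \<in> T)"
  by (simp add: restrict_keys_def lookup_mapp in_keys_iff when_def)

lemma keys_restrict_keys: "Poly_Mapping.keys (restrict_keys f T) = Poly_Mapping.keys f \<inter> T"
  by (auto simp: in_keys_iff lookup_restrict_keys)

lemma restrict_keys_add_Compl:
  "restrict_keys f T + restrict_keys f (- T) = (f :: 'a \<Rightarrow>\<^sub>0 'b::monoid_add)"
  by (rule poly_mapping_eqI) (simp add: lookup_add lookup_restrict_keys when_def)

lemma eval1_eq_sum:
  assumes "finite A" "Poly_Mapping.keys f \<subseteq> A"
  shows "eval1 f = (\<Sum>k\<in>A. Poly_Mapping.lookup f k)"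
  unfolding eval1_def
  by (rule sum.mono_neutral_left) (use assms in \<open>auto simp: in_keys_iff\<close>)

lemma eval1_add: "eval1 (f + g) = eval1 f + eval1 g"
proof -
  let ?A = "Poly_Mapping.keys f \<union> Poly_Mapping.keys g"
  have "eval1 (f + g) = (\<Sum>k\<in>?A. Poly_Mapping.lookup (f + g) k)"
    using keys_add[of f g] by (intro eval1_eq_sum) auto
  also have "\<dots> = eval1 f + eval1 g"
    by (simp add: lookup_add sum.distrib eval1_eq_sum[of ?A])
  finally show ?thesis .
qed

lemma eval1_restrict_keys:
  "eval1 (restrict_keys f T) = (\<Sum>k\<in>Poly_Mapping.keys f \<inter> T. Poly_Mapping.lookup f k)"
  unfolding eval1_def keys_restrict_keys by (rule sum.cong) (auto simp: lookup_restrict_keys)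

definition unique_closest_pair :: "int set \<Rightarrow> int \<Rightarrow> int \<Rightarrow> bool" where
  "unique_closest_pair T p d \<longleftrightarrow> 0 < d \<and> p \<in> T \<and> p + d \<in> T \<and>
     (\<forall>x\<in>T. \<forall>y\<in>T. x < y \<longrightarrow> (x = p \<and> y = p + d) \<or> d < y - x)"

definition hyper_monolithic_set :: "int set \<Rightarrow> bool" where
  "hyper_monolithic_set T \<longleftrightarrow>
     (\<exists>p d. unique_closest_pair T p d \<and> ((\<forall>x\<in>T. p \<le> x) \<or> (\<forall>x\<in>T. x \<le> p + d)))"

lemma hyper_monolithic_set_uminus:
  assumes "hyper_monolithic_set T"
  shows "hyper_monolithic_set (uminus ` T)"
proof -
  obtain p d where pair: "unique_closest_pair T p d"
    and at_end: "(\<forall>x\<in>T. p \<le> x) \<or> (\<forall>x\<in>T. x \<le> p + d)"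
    using assms unfolding hyper_monolithic_set_def by blast
  have "unique_closest_pair (uminus ` T) (- (p + d)) d"
    using pair unfolding unique_closest_pair_def by force
  moreover have "(\<forall>x\<in>uminus ` T. - (p + d) \<le> x) \<or> (\<forall>x\<in>uminus ` T. x \<le> - (p + d) + d)"
    using at_end by auto
  ultimately show ?thesis unfolding hyper_monolithic_set_def by blast
qed

lemma unique_closest_pair_consecutive:
  fixes ks :: "int list"
  assumes sorted: "sorted_wrt (>) ks" and pair: "unique_closest_pair (set ks) p d"
  obtains j where "Suc j < length ks" "ks ! Suc j = p" "ks ! j = p + d"
    "\<And>i. Suc i < length ks \<Longrightarrow> i \<noteq> j \<Longrightarrow> d < ks ! i - ks ! Suc i"
proof -
  have less: "ks ! j < ks ! i" if "i < j" "j < length ks" for i j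
    using sorted_wrt_nth_less[OF sorted that] .
  have pairs: "(x = p \<and> y = p + d) \<or> d < y - x" if "x \<in> set ks" "y \<in> set ks" "x < y" for x y
    using pair that unfolding unique_closest_pair_def by blast
  obtain k k' where k: "k < length ks" "ks ! k = p" and k': "k' < length ks" "ks ! k' = p + d"
    using pair unfolding unique_closest_pair_def by (metis in_set_conv_nth)
  have "k' < k"
    using less[of k k'] k k' pair unfolding unique_closest_pair_def
    by (cases k k' rule: linorder_cases) auto
  then obtain j where j: "k = Suc j" by (cases k) auto
  have "ks ! j \<le> p + d"
    using less[of k' j] k k' \<open>k' < k\<close> j by (cases "k' = j") auto
  moreover have "p < ks ! j" using less[of j k] k j by simp
  ultimately have top: "ks ! j = p + d"
    using pairs[of p "ks ! j"] k j by auto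
  have "d < ks ! i - ks ! Suc i" if "Suc i < length ks" "i \<noteq> j" for i
  proof -
    have "ks ! Suc i \<noteq> p"
      using less[of "Suc i" k] less[of k "Suc i"] that k j by (cases "Suc i" k rule: linorder_cases) auto
    then show ?thesis
      using pairs[of "ks ! Suc i" "ks ! i"] less[of i "Suc i"] that by simp
  qed
  then show thesis using that k j top by simp
qed

lemma exps_sorted: "sorted_wrt (>) (exps f)"
  by (simp add: exps_def sorted_wrt_rev)

lemma set_exps: "set (exps f) = Poly_Mapping.keys f"
  by (simp add: exps_def)

lemma length_exps: "length (exps f) = card (supp f)"
  by (simp add: exps_def supp_def)

lemma hyper_monolithic_if_keys:
  assumes "hyper_monolithic_set (Poly_Mapping.keys f)"
  shows "hyper_monolithic f"
proof -
  define ks where "ks = exps f"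
  define n where "n = length ks - 1"
  obtain p d where pair: "unique_closest_pair (set ks) p d"
    and at_end: "(\<forall>x\<in>set ks. p \<le> x) \<or> (\<forall>x\<in>set ks. x \<le> p + d)"
    using assms unfolding hyper_monolithic_set_def ks_def set_exps by blast
  obtain j where j: "Suc j < length ks" "ks ! Suc j = p" "ks ! j = p + d"
    and gaps: "\<And>i. Suc i < length ks \<Longrightarrow> i \<noteq> j \<Longrightarrow> d < ks ! i - ks ! Suc i"
    using unique_closest_pair_consecutive[OF exps_sorted pair[unfolded ks_def]]
    unfolding ks_def by blast
  have less: "ks ! i' < ks ! i" if "i < i'" "i' < length ks" for i i'
    using sorted_wrt_nth_less[OF exps_sorted that[unfolded ks_def]] by (simp add: ks_def)
  have "j = 0 \<or> Suc j = n"
  proof (rule ccontr)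
    assume "\<not> (j = 0 \<or> Suc j = n)"
    then have "ks ! 0 > p + d" "ks ! n < p" using less[of 0 j] less[of "Suc j" n] j by (auto simp: n_def)
    moreover have "ks ! 0 \<in> set ks" "ks ! n \<in> set ks" using j by (auto simp: n_def intro!: nth_mem)
    ultimately show False using at_end by fastforce
  qed
  then have "(\<forall>i. 1 \<le> i \<and> i \<le> n - 1 \<longrightarrow> ks!0 - ks!1 < ks!i - ks!(i+1)) \<or>
      (\<forall>i. i + 2 \<le> n \<longrightarrow> ks!(n-1) - ks!n < ks!i - ks!(i+1))"
  proof
    assume "j = 0"
    then show ?thesis using j gaps by (intro disjI1) (auto simp: n_def)
  next
    assume jn: "Suc j = n"
    show ?thesis
    proof (intro disjI2 allI impI)
      fix i assume "i + 2 \<le> n"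
      then have "Suc i < length ks" "i \<noteq> j" using jn j by (auto simp: n_def)
      then show "ks!(n-1) - ks!n < ks!i - ks!(i+1)" using gaps[of i] j jn by auto
    qed
  qed
  moreover have "card (supp f) > 1" using j by (simp add: ks_def length_exps)
  ultimately show ?thesis unfolding hyper_monolithic_def ks_def n_def Let_def by simp
qed

lemma sum_weighted_cover_pigeonhole:
  fixes w :: "'a \<Rightarrow> nat" and T :: "'i \<Rightarrow> 'a set"
  assumes "finite S" "finite I" "I \<noteq> {}"
    and cover: "\<And>x. x \<in> S \<Longrightarrow> k \<le> card {i \<in> I. x \<in> T i}"
  obtains i where "i \<in> I" "k * sum w S \<le> card I * sum w (S \<inter> T i)"
proof -
  let ?W = "\<lambda>i. sum w (S \<inter> T i)"
  have "Max (?W ` I) \<in> ?W ` I" using assms(2,3) by simp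
  then obtain i where i: "i \<in> I" "Max (?W ` I) = ?W i" by blast
  have "k * sum w S = (\<Sum>x\<in>S. k * w x)" by (simp add: sum_distrib_left)
  also have "\<dots> \<le> (\<Sum>x\<in>S. card {i \<in> I. x \<in> T i} * w x)"
    using cover by (intro sum_mono mult_right_mono) auto
  also have "\<dots> = (\<Sum>x\<in>S. \<Sum>j\<in>I. if x \<in> T j then w x else 0)"
    using assms(2) by (simp add: sum.inter_filter[symmetric])
  also have "\<dots> = (\<Sum>j\<in>I. ?W j)"
    using assms(1) by (subst sum.swap) (simp add: sum.inter_restrict)
  also have "\<dots> \<le> (\<Sum>j\<in>I. ?W i)"
    using i assms(2) by (intro sum_mono) (metis Max_ge finite_imageI imageI)
  finally show thesis using that i by simp
qed

lemma mem_uminus_image_iff: "x \<in> uminus ` A \<longleftrightarrow> - x \<in> (A :: 'a::group_add set)"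
  by (metis image_eqI minus_minus imageE)

locale d_separated =
  fixes S :: "int set" and d :: int
  assumes finite_S: "finite S" and d_pos: "0 < d"
    and separated: "\<And>x y. x \<in> S \<Longrightarrow> y \<in> S \<Longrightarrow> x < y \<Longrightarrow> d \<le> y - x"
begin

lemma nothing_within_d: "x \<in> S \<Longrightarrow> y \<in> S \<Longrightarrow> x < y \<Longrightarrow> y < x + d \<Longrightarrow> False"
  using separated by force

definition isolated :: "int \<Rightarrow> bool" where
  "isolated x \<longleftrightarrow> x - d \<notin> S \<and> x + d \<notin> S"

definition pairs_below :: "int \<Rightarrow> nat" where
  "pairs_below x = card {y \<in> S. y + d \<in> S \<and> y < x}"

lemma pairs_below_step:
  assumes "x \<in> S" "x + d \<in> S"
  shows "pairs_below (x + d) = Suc (pairs_below x)"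
proof -
  have "{y \<in> S. y + d \<in> S \<and> y < x + d} = insert x {y \<in> S. y + d \<in> S \<and> y < x}"
    using assms d_pos nothing_within_d[of x] by force
  then show ?thesis using finite_S by (simp add: pairs_below_def)
qed

definition colour_class :: "bool \<Rightarrow> int set" where
  "colour_class q = {x \<in> S. isolated x \<or> even (pairs_below x) = q}"

lemma colour_class_subset: "colour_class q \<subseteq> S"
  by (auto simp: colour_class_def)

lemma colour_class_no_pair: "x \<in> colour_class q \<Longrightarrow> x + d \<notin> colour_class q"
  using pairs_below_step by (auto simp: colour_class_def isolated_def)

lemma unique_closest_pair_if_single_pair:
  assumes "T \<subseteq> S" "p \<in> T" "p + d \<in> T" "\<And>x. x \<in> T \<Longrightarrow> x + d \<in> T \<Longrightarrow> x = p"
  shows "unique_closest_pair T p d"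
proof -
  have "(x = p \<and> y = p + d) \<or> d < y - x" if "x \<in> T" "y \<in> T" "x < y" for x y
  proof (cases "y = x + d")
    case True
    then show ?thesis using assms(4) that by auto
  next
    case False
    have "d \<le> y - x" using separated[of x y] assms(1) that by blast
    with False show ?thesis by auto
  qed
  then show ?thesis using assms d_pos unfolding unique_closest_pair_def by blast
qed

definition lower_set :: "int \<Rightarrow> bool \<Rightarrow> int set" where
  "lower_set p q = insert p (insert (p + d) {x \<in> colour_class q. p + d < x})"

lemma lower_set_subset: "p \<in> S \<Longrightarrow> p + d \<in> S \<Longrightarrow> lower_set p q \<subseteq> S"
  using colour_class_subset by (auto simp: lower_set_def)

lemma hyper_monolithic_lower_set:
  assumes "p \<in> S" "p + d \<in> S" "p + 2 * d \<notin> colour_class q"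
  shows "hyper_monolithic_set (lower_set p q)"
proof -
  have in_colour_class: "x \<in> colour_class q" if "x \<in> lower_set p q" "p + d < x" for x
    using that d_pos by (auto simp: lower_set_def)
  have single_pair: "x = p" if x: "x \<in> lower_set p q" "x + d \<in> lower_set p q" for x
  proof -
    consider "x = p" | "x = p + d" | "p + d < x" using x by (auto simp: lower_set_def)
    then show ?thesis
    proof cases
      case 2
      then have "x + d = p + 2 * d" "p + d < x + d" using d_pos by auto
      then have "p + 2 * d \<in> colour_class q" using in_colour_class x(2) by metis
      with assms(3) show ?thesis by blast
    next
      case 3
      then have "x \<in> colour_class q" "x + d \<in> colour_class q"
        using in_colour_class x d_pos by auto
      then show ?thesis using colour_class_no_pair by blast
    qed
  qed
  have "lower_set p q \<subseteq> S" "p \<in> lower_set p q" "p + d \<in> lower_set p q"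
    using assms(1,2) lower_set_subset by (auto simp: lower_set_def)
  then have "unique_closest_pair (lower_set p q) p d"
    using single_pair by (rule unique_closest_pair_if_single_pair)
  moreover have "\<forall>x\<in>lower_set p q. p \<le> x" using d_pos by (auto simp: lower_set_def)
  ultimately show ?thesis unfolding hyper_monolithic_set_def by blast
qed

context
  fixes a :: int
  assumes a_pair: "a \<in> S" "a + d \<in> S"
    and a_least: "\<And>x. x \<in> S \<Longrightarrow> x + d \<in> S \<Longrightarrow> a \<le> x"
begin

lemma pairs_below_lowest: "pairs_below a = 0"
  using a_least finite_S by (force simp: pairs_below_def)

lemma pairs_below_lowest_chain:
  "pairs_below (a + d) = 1"
  "a + 2 * d \<in> S \<Longrightarrow> pairs_below (a + 2 * d) = 2"
  "a + 2 * d \<in> S \<Longrightarrow> a + 3 * d \<in> S \<Longrightarrow> pairs_below (a + 3 * d) = 3"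
  using pairs_below_lowest a_pair
    pairs_below_step[of a] pairs_below_step[of "a + d"] pairs_below_step[of "a + 2 * d"]
  by (simp_all add: algebra_simps numeral_eq_Suc)

(* If a + 2d \<in> S, then (a + d, a + 2d) would be a second closest pair of lower_set a True. *)
definition lower_family :: "bool \<Rightarrow> int set" where
  "lower_family q = (if q \<and> a + 2 * d \<in> S then lower_set (a + d) True else lower_set a q)"

lemma lower_family_subset: "lower_family q \<subseteq> S"
  using lower_set_subset a_pair by (auto simp: lower_family_def algebra_simps)

lemma colour_class_in_lower_family:
  assumes "x \<in> colour_class q" "a + d < x"
  shows "x \<in> lower_family q"
proof (cases "q \<and> a + 2 * d \<in> S")
  case True
  have "a + 2 * d \<le> x" using separated[of "a + d" x] a_pair assms colour_class_subset by force
  then show ?thesis using True assms by (auto simp: lower_family_def lower_set_def)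
next
  case False
  then show ?thesis using assms by (auto simp: lower_family_def lower_set_def)
qed

lemma hyper_monolithic_lower_family: "hyper_monolithic_set (lower_family q)"
proof -
  have not_isolated: "\<not> isolated x" if "x \<in> S" "x - d \<in> S" for x
    using that by (simp add: isolated_def)
  show ?thesis
  proof (cases "q \<and> a + 2 * d \<in> S")
    case True
    have "a + d + 2 * d \<notin> colour_class True"
      using pairs_below_lowest_chain not_isolated[of "a + 3 * d"] True
      by (auto simp: colour_class_def algebra_simps)
    then show ?thesis using True a_pair hyper_monolithic_lower_set[of "a + d" True]
      by (simp add: lower_family_def algebra_simps)
  next
    case False
    have "a + 2 * d \<notin> colour_class q"
      using pairs_below_lowest_chain not_isolated[of "a + 2 * d"] a_pair False
      by (auto simp: colour_class_def algebra_simps)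
    then show ?thesis using False a_pair hyper_monolithic_lower_set[of a q]
      by (auto simp: lower_family_def)
  qed
qed

lemma lower_family_cover:
  assumes "x \<in> S" "a \<le> x"
  shows "\<exists>q. x \<in> lower_family q"
proof (cases "a + d < x")
  case True
  then show ?thesis using assms colour_class_in_lower_family[of x "even (pairs_below x)"]
    by (auto simp: colour_class_def)
next
  case False
  then have "x = a \<or> x = a + d" using assms a_pair nothing_within_d[of a x] by force
  then show ?thesis by (auto simp: lower_family_def lower_set_def)
qed

lemma isolated_in_lower_family:
  assumes "x \<in> S" "a < x" "isolated x"
  shows "x \<in> lower_family q"
proof -
  have "x \<noteq> a + d" using assms a_pair by (auto simp: isolated_def)
  then have "a + d < x" using assms a_pair nothing_within_d[of a x] by force
  then show ?thesis using assms colour_class_in_lower_family by (simp add: colour_class_def)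
qed

end

lemma lower_cover:
  assumes "a \<in> S" "a + d \<in> S" "\<And>x. x \<in> S \<Longrightarrow> x + d \<in> S \<Longrightarrow> a \<le> x"
  obtains L :: "bool \<Rightarrow> int set" where "\<And>q. L q \<subseteq> S" "\<And>q. hyper_monolithic_set (L q)"
    "\<And>x. x \<in> S \<Longrightarrow> a \<le> x \<Longrightarrow> \<exists>q. x \<in> L q"
    "\<And>x q. x \<in> S \<Longrightarrow> a < x \<Longrightarrow> isolated x \<Longrightarrow> x \<in> L q"
proof (rule that)
  show "lower_family a q \<subseteq> S" for q by (rule lower_family_subset[OF assms])
  show "hyper_monolithic_set (lower_family a q)" for q by (rule hyper_monolithic_lower_family[OF assms])
  show "\<exists>q. x \<in> lower_family a q" if "x \<in> S" "a \<le> x" for x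
    using lower_family_cover[OF assms that] .
  show "x \<in> lower_family a q" if "x \<in> S" "a < x" "isolated x" for x q
    using isolated_in_lower_family[OF assms that] .
qed

lemma upper_cover:
  assumes b: "b \<in> S" "b + d \<in> S" and greatest: "\<And>x. x \<in> S \<Longrightarrow> x + d \<in> S \<Longrightarrow> x \<le> b"
  obtains U :: "bool \<Rightarrow> int set" where "\<And>q. U q \<subseteq> S" "\<And>q. hyper_monolithic_set (U q)"
    "\<And>x. x \<in> S \<Longrightarrow> x \<le> b + d \<Longrightarrow> \<exists>q. x \<in> U q"
    "\<And>x q. x \<in> S \<Longrightarrow> x < b + d \<Longrightarrow> isolated x \<Longrightarrow> x \<in> U q"
proof -
  interpret reflected: d_separated "uminus ` S" d
  proof
    show "d \<le> y - x" if "x \<in> uminus ` S" "y \<in> uminus ` S" "x < y" for x y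
      using separated[of "- y" "- x"] that by (simp add: mem_uminus_image_iff)
  qed (use finite_S d_pos in auto)
  have "- (b + d) \<in> uminus ` S" "- (b + d) + d \<in> uminus ` S"
    using b by (simp_all add: mem_uminus_image_iff add.commute)
  moreover have "- (b + d) \<le> x" if "x \<in> uminus ` S" "x + d \<in> uminus ` S" for x
  proof -
    have "- x - d \<in> S" "- x - d + d \<in> S" using that by (simp_all add: mem_uminus_image_iff)
    then show ?thesis using greatest by fastforce
  qed
  ultimately show thesis
  proof (rule reflected.lower_cover)
    fix L :: "bool \<Rightarrow> int set"
    assume L: "\<And>q. L q \<subseteq> uminus ` S" "\<And>q. hyper_monolithic_set (L q)"
      "\<And>x. x \<in> uminus ` S \<Longrightarrow> - (b + d) \<le> x \<Longrightarrow> \<exists>q. x \<in> L q"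
      "\<And>x q. x \<in> uminus ` S \<Longrightarrow> - (b + d) < x \<Longrightarrow> reflected.isolated x \<Longrightarrow> x \<in> L q"
    show thesis
    proof (rule that[of "\<lambda>q. uminus ` L q"])
      show "uminus ` L q \<subseteq> S" for q using L(1)[of q] by (auto simp: mem_uminus_image_iff)
      show "hyper_monolithic_set (uminus ` L q)" for q using L(2) by (rule hyper_monolithic_set_uminus)
      show "\<exists>q. x \<in> uminus ` L q" if "x \<in> S" "x \<le> b + d" for x
        using L(3)[of "- x"] that by (simp add: mem_uminus_image_iff)
      show "x \<in> uminus ` L q" if "x \<in> S" "x < b + d" "isolated x" for x q
      proof -
        have "reflected.isolated (- x)"
          using that unfolding isolated_def reflected.isolated_def
          by (simp add: mem_uminus_image_iff add.commute)
        then show ?thesis using L(4)[of "- x" q] that by (simp add: mem_uminus_image_iff)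
      qed
    qed
  qed
qed

lemma double_cover_by_hyper_monolithic_sets:
  assumes "\<exists>x\<in>S. x + d \<in> S"
  obtains T :: "bool \<times> bool \<Rightarrow> int set"
  where "\<And>i. T i \<subseteq> S" "\<And>i. hyper_monolithic_set (T i)"
    "\<And>x. x \<in> S \<Longrightarrow> 2 \<le> card {i \<in> UNIV. x \<in> T i}"
proof -
  define E where "E = {x \<in> S. x + d \<in> S}"
  have "finite E" "E \<noteq> {}" using finite_S assms by (auto simp: E_def)
  define a b where "a = Min E" and "b = Max E"
  have "a \<in> E" "b \<in> E" using \<open>finite E\<close> \<open>E \<noteq> {}\<close> by (simp_all add: a_def b_def)
  have a_least: "a \<le> x" and b_greatest: "x \<le> b" if "x \<in> S" "x + d \<in> S" for x
    using that \<open>finite E\<close> by (simp_all add: a_def b_def E_def)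
  have "a \<le> b" using \<open>a \<in> E\<close> b_greatest unfolding E_def by blast
  have isolated_outside: "isolated x" if "x \<in> S" "x < a \<or> b + d < x" for x
    using that a_least[of x] b_greatest[of x] a_least[of "x - d"] b_greatest[of "x - d"]
    unfolding isolated_def using d_pos by auto
  obtain L :: "bool \<Rightarrow> int set" where L: "\<And>q. L q \<subseteq> S" "\<And>q. hyper_monolithic_set (L q)"
    "\<And>x. x \<in> S \<Longrightarrow> a \<le> x \<Longrightarrow> \<exists>q. x \<in> L q"
    "\<And>x q. x \<in> S \<Longrightarrow> a < x \<Longrightarrow> isolated x \<Longrightarrow> x \<in> L q"
    using lower_cover[of a] \<open>a \<in> E\<close> a_least unfolding E_def by blast
  obtain U :: "bool \<Rightarrow> int set" where U: "\<And>q. U q \<subseteq> S" "\<And>q. hyper_monolithic_set (U q)"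
    "\<And>x. x \<in> S \<Longrightarrow> x \<le> b + d \<Longrightarrow> \<exists>q. x \<in> U q"
    "\<And>x q. x \<in> S \<Longrightarrow> x < b + d \<Longrightarrow> isolated x \<Longrightarrow> x \<in> U q"
    using upper_cover[of b] \<open>b \<in> E\<close> b_greatest unfolding E_def by blast
  define T :: "bool \<times> bool \<Rightarrow> int set" where "T = (\<lambda>(lower, q). if lower then L q else U q)"
  have "2 \<le> card {i \<in> UNIV. x \<in> T i}" if "x \<in> S" for x
  proof -
    have two: "2 \<le> card {i \<in> UNIV. x \<in> T i}" if "x \<in> T i" "x \<in> T j" "i \<noteq> j" for i j
      using that card_mono[of "{i \<in> UNIV. x \<in> T i}" "{i, j}"] by simp
    consider "x < a" | "b + d < x" | "a \<le> x" "x \<le> b + d" by linarith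
    then show ?thesis
    proof cases
      case 1
      then show ?thesis using two[of "(False, True)" "(False, False)"] U(4) isolated_outside
          \<open>x \<in> S\<close> \<open>a \<le> b\<close> d_pos
        by (simp add: T_def)
    next
      case 2
      then show ?thesis using two[of "(True, True)" "(True, False)"] L(4) isolated_outside
          \<open>x \<in> S\<close> \<open>a \<le> b\<close> d_pos
        by (simp add: T_def)
    next
      case 3
      then obtain q q' where "x \<in> L q" "x \<in> U q'" using L(3) U(3) \<open>x \<in> S\<close> by blast
      then show ?thesis using two[of "(True, q)" "(False, q')"] by (simp add: T_def)
    qed
  qed
  moreover have "T i \<subseteq> S" "hyper_monolithic_set (T i)" for i
    using L U by (auto simp: T_def split: prod.splits)
  ultimately show thesis using that by blast
qed

lemma heavy_hyper_monolithic_subset: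
  fixes w :: "int \<Rightarrow> nat"
  assumes "\<exists>x\<in>S. x + d \<in> S"
  obtains T where "T \<subseteq> S" "hyper_monolithic_set T" "sum w S \<le> 2 * sum w T"
proof -
  obtain T :: "bool \<times> bool \<Rightarrow> int set" where T: "\<And>i. T i \<subseteq> S" "\<And>i. hyper_monolithic_set (T i)"
    and cover: "\<And>x. x \<in> S \<Longrightarrow> 2 \<le> card {i \<in> UNIV. x \<in> T i}"
    using double_cover_by_hyper_monolithic_sets[OF assms] by blast
  obtain i where "2 * sum w S \<le> card (UNIV :: (bool \<times> bool) set) * sum w (S \<inter> T i)"
    using sum_weighted_cover_pigeonhole[OF finite_S finite_UNIV UNIV_not_empty cover] by blast
  moreover have "card (UNIV :: (bool \<times> bool) set) = 4"
    by (simp flip: UNIV_Times_UNIV add: card_cartesian_product)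
  ultimately have "sum w S \<le> 2 * sum w (T i)"
    using T(1)[of i] by (simp add: Int_absorb1)
  then show thesis using that T by blast
qed

end

lemma exists_d_separated:
  assumes "finite S" "2 \<le> card S"
  obtains d where "d_separated S d" "\<exists>x\<in>S. x + d \<in> S"
proof -
  define D where "D = {y - x | x y. x \<in> S \<and> y \<in> S \<and> x < y}"
  have "D \<subseteq> (\<lambda>(x, y). y - x) ` (S \<times> S)" by (auto simp: D_def)
  then have "finite D" using assms(1) by (auto intro: finite_subset)
  have "\<exists>x\<in>S. \<exists>y\<in>S. x < y"
  proof (rule ccontr)
    assume "\<not> ?thesis"
    moreover have "S \<noteq> {}" using assms(2) by auto
    ultimately have "S \<subseteq> {Min S}" using Min_le[OF assms(1)] Min_in[OF assms(1)] by force
    then have "card S \<le> 1" using card_mono[of "{Min S}" S] by simp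
    with assms(2) show False by simp
  qed
  then have "D \<noteq> {}" by (auto simp: D_def)
  then have "Min D \<in> D" using \<open>finite D\<close> by simp
  then obtain x y where "x \<in> S" "y \<in> S" "x < y" "Min D = y - x" by (auto simp: D_def)
  then have "0 < Min D" "\<exists>x\<in>S. x + Min D \<in> S" by (auto intro!: bexI[of _ x])
  moreover have "Min D \<le> y - x" if "x \<in> S" "y \<in> S" "x < y" for x y
    using \<open>finite D\<close> that by (intro Min_le) (auto simp: D_def)
  ultimately show thesis
    using assms(1) by (intro that[of "Min D"]) (unfold_locales, auto)
qed

theorem lemma2p9:
  fixes f :: laurent_N0
  assumes "card (supp f) \<ge> 3"
  shows "\<exists>g h :: laurent_N0. f = g + h \<and> hyper_monolithic g \<and> eval1 h \<le> eval1 g"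
proof -
  let ?S = "Poly_Mapping.keys f"
  have "finite ?S" "2 \<le> card ?S" using assms by (simp_all add: supp_def)
  then obtain d where "d_separated ?S d" "\<exists>x\<in>?S. x + d \<in> ?S"
    by (rule exists_d_separated)
  then obtain T where T: "T \<subseteq> ?S" "hyper_monolithic_set T"
    and heavy: "eval1 f \<le> 2 * sum (Poly_Mapping.lookup f) T"
    unfolding eval1_def by (rule d_separated.heavy_hyper_monolithic_subset)
  define g h :: laurent_N0 where "g = restrict_keys f T" and "h = restrict_keys f (- T)"
  have "f = g + h" by (simp add: g_def h_def restrict_keys_add_Compl)
  moreover have "hyper_monolithic g"
    using T by (intro hyper_monolithic_if_keys) (simp add: g_def keys_restrict_keys Int_absorb1)
  moreover have "eval1 h \<le> eval1 g"
  proof -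
    have "eval1 g = sum (Poly_Mapping.lookup f) T"
      using T(1) by (simp add: g_def eval1_restrict_keys Int_absorb1)
    then show ?thesis using heavy eval1_add[of g h] \<open>f = g + h\<close> by simp
  qed
  ultimately show ?thesis by blast
qed

end
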